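(* Let $f$ be any WTP function, $\tilde f$ its concave relaxation, and $\widetilde F(\tilde x)=\max_{\tilde y\in\widetilde{\mathcal{Y}}_{\mathcal{M}}(\tilde x)}\tilde f(\tilde y)$. Then $\widetilde F$ is concave on $\widetilde{\mathcal{X}}_\ell$.
   Context: $\mathcal{M}$ is a matroid on $[n]$ with matroid polytope $\mathcal{P}(\mathcal{M})$ (convex hull of characteristic vectors of independent sets). $\widetilde{\mathcal{X}}_\ell=\{\tilde x\in[0,1]^n:\sum_i\tilde x_i\le\ell\}$ and $\widetilde{\mathcal{Y}}_{\mathcal{M}}(\tilde x)=\{\tilde y\in[0,1]^n:\tilde y\in\mathcal{P}(\mathcal{M}),\tilde y\le\tilde x\}$. A WTP function is $f(y)=\sum_{j\in\mathcal{C}}c_j\min\{b_j,y\cdot w_j\}$ for $y\in\{0,1\}^n$, with finite $\mathcal{C}$, $c_j>0$, $b_j\in\mathbb{R}_{\ge0}\cup\{\infty\}$, $w_j\in\mathbb{R}^n_{\ge0}$; its concave relaxation $\tilde f$ is the same formula for $y\in[0,1]^n$. *)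

theory Defs
  imports "HOL-Analysis.Analysis"
begin

text \<open>Ground set [n] is modelled as the finite type 'n; vectors in R^n are real^'n.\<close>

definition matroid :: "'n::finite set set \<Rightarrow> bool" where
  "matroid I \<longleftrightarrow>
     {} \<in> I \<and>
     (\<forall>A B. A \<in> I \<longrightarrow> B \<subseteq> A \<longrightarrow> B \<in> I) \<and>
     (\<forall>A B. A \<in> I \<longrightarrow> B \<in> I \<longrightarrow> card A < card B \<longrightarrow> (\<exists>e \<in> B - A. insert e A \<in> I))"

definition char_vec :: "'n::finite set \<Rightarrow> real ^ 'n" where
  "char_vec A = (\<chi> i. if i \<in> A then 1 else 0)"

definition matroid_polytope :: "'n::finite set set \<Rightarrow> (real ^ 'n) set" where
  "matroid_polytope I = convex hull (char_vec ` I)"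

definition unit_cube :: "(real ^ 'n::finite) set" where
  "unit_cube = {x. \<forall>i. 0 \<le> x $ i \<and> x $ i \<le> 1}"

definition X_tilde :: "nat \<Rightarrow> (real ^ 'n::finite) set" where
  "X_tilde l = {x \<in> unit_cube. (\<Sum>i\<in>UNIV. x $ i) \<le> real l}"

definition Y_tilde :: "'n::finite set set \<Rightarrow> real ^ 'n \<Rightarrow> (real ^ 'n) set" where
  "Y_tilde I x = {y \<in> unit_cube. y \<in> matroid_polytope I \<and> (\<forall>i. y $ i \<le> x $ i)}"

text \<open>A WTP function (and its concave relaxation: the same formula evaluated on [0,1]^n).
  Index set C, coefficients c_j > 0, caps b_j in R_{>=0} \<union> {\<infinity>} (as ereal), weights w_j \<ge> 0.\<close>

definition wtp_params :: "'c set \<Rightarrow> ('c \<Rightarrow> real) \<Rightarrow> ('c \<Rightarrow> ereal) \<Rightarrow> ('c \<Rightarrow> real ^ 'n::finite) \<Rightarrow> bool" where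
  "wtp_params C c b w \<longleftrightarrow> finite C \<and> (\<forall>j\<in>C. c j > 0 \<and> b j \<ge> 0 \<and> (\<forall>i. w j $ i \<ge> 0))"

definition wtp_fun :: "'c set \<Rightarrow> ('c \<Rightarrow> real) \<Rightarrow> ('c \<Rightarrow> ereal) \<Rightarrow> ('c \<Rightarrow> real ^ 'n::finite) \<Rightarrow> real ^ 'n \<Rightarrow> real" where
  "wtp_fun C c b w y = (\<Sum>j\<in>C. c j * real_of_ereal (min (b j) (ereal (y \<bullet> w j))))"

definition F_tilde :: "'n::finite set set \<Rightarrow> 'c set \<Rightarrow> ('c \<Rightarrow> real) \<Rightarrow> ('c \<Rightarrow> ereal) \<Rightarrow> ('c \<Rightarrow> real ^ 'n) \<Rightarrow> real ^ 'n \<Rightarrow> real" where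
  "F_tilde I C c b w x = (SUP y \<in> Y_tilde I x. wtp_fun C c b w y)"

end

theory Submission
  imports Defs
begin

text \<open>
  \<open>F_tilde\<close> is the value function of a parametric maximisation whose objective is concave and
  whose feasible sets form a convex graph \<open>{(x, y). y \<in> Y_tilde I x}\<close>: the cube and polytope
  constraints do not involve \<open>x\<close>, and \<open>y \<le> x\<close> is linear in the pair. A convex combination of
  feasible points for \<open>x\<^sub>1\<close> and \<open>x\<^sub>2\<close> is feasible for the combination of \<open>x\<^sub>1\<close> and \<open>x\<^sub>2\<close>, and
  concavity of the objective bounds its value from below; taking suprema gives concavity of
  \<open>F_tilde\<close>. The suprema are genuine because \<open>0\<close> is always feasible (of the matroid axioms only
  \<open>{} \<in> I\<close> is needed) and a concave function is continuous, hence bounded on the unit cube.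
\<close>

lemma SUP_weighted_sum_le:
  fixes g :: "'a \<Rightarrow> real" and h :: "'b \<Rightarrow> real"
  assumes "A \<noteq> {}" "B \<noteq> {}" "0 < u" "0 < v"
    and bound: "\<And>y z. y \<in> A \<Longrightarrow> z \<in> B \<Longrightarrow> u * g y + v * h z \<le> M"
  shows "u * (SUP y\<in>A. g y) + v * (SUP z\<in>B. h z) \<le> M"
proof -
  have SUP_g: "(SUP y\<in>A. g y) \<le> (M - v * h z) / u" if "z \<in> B" for z
    using bound[OF _ that] assms(1,3) by (intro cSUP_least) (auto simp: field_simps)
  have "(SUP z\<in>B. h z) \<le> (M - u * (SUP y\<in>A. g y)) / v"
    using SUP_g assms(2,3,4) by (intro cSUP_least) (auto simp: field_simps)
  then show ?thesis
    using assms(4) by (simp add: field_simps)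
qed

theorem concave_on_SUP_convex_graph:
  fixes f :: "'b::real_vector \<Rightarrow> real" and Y :: "'a::real_vector \<Rightarrow> 'b set"
  assumes graph: "convex (SIGMA x:S. Y x)" and f: "concave_on K f"
    and nonempty: "\<And>x. x \<in> S \<Longrightarrow> Y x \<noteq> {}"
    and sub: "\<And>x. x \<in> S \<Longrightarrow> Y x \<subseteq> K"
    and bdd: "\<And>x. x \<in> S \<Longrightarrow> bdd_above (f ` Y x)"
  shows "concave_on S (\<lambda>x. SUP y\<in>Y x. f y)"
proof -
  have "S = fst ` (SIGMA x:S. Y x)"
    using nonempty by (auto simp: fst_image_Sigma)
  then have "convex S"
    using convex_linear_image[OF linear_fst graph] by simp
  moreover have "(1 - t) * (SUP y\<in>Y x1. f y) + t * (SUP y\<in>Y x2. f y)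
      \<le> (SUP y\<in>Y ((1 - t) *\<^sub>R x1 + t *\<^sub>R x2). f y)"
    if t: "0 < t" "t < 1" and x: "x1 \<in> S" "x2 \<in> S" for t x1 x2
  proof (rule SUP_weighted_sum_le)
    fix y1 y2 assume y: "y1 \<in> Y x1" "y2 \<in> Y x2"
    let ?x = "(1 - t) *\<^sub>R x1 + t *\<^sub>R x2" and ?y = "(1 - t) *\<^sub>R y1 + t *\<^sub>R y2"
    have "(1 - t) *\<^sub>R (x1, y1) + t *\<^sub>R (x2, y2) \<in> (SIGMA x:S. Y x)"
      using graph x y t by (intro convexD) auto
    then have x_S: "?x \<in> S" and y_Y: "?y \<in> Y ?x"
      by auto
    have "(1 - t) * f y1 + t * f y2 \<le> f ?y"
      using concave_onD[OF f, of t] t x y sub by auto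
    also have "\<dots> \<le> (SUP y\<in>Y ?x. f y)"
      using bdd[OF x_S] y_Y by (rule cSUP_upper2) simp
    finally show "(1 - t) * f y1 + t * f y2 \<le> (SUP y\<in>Y ?x. f y)" .
  qed (use nonempty x t in auto)
  ultimately show ?thesis
    unfolding concave_on_def by (intro convex_onI) (auto simp: algebra_simps)
qed

lemma concave_on_sum_fun:
  assumes "convex S" "\<And>j. j \<in> C \<Longrightarrow> concave_on S (f j)"
  shows "concave_on S (\<lambda>x. \<Sum>j\<in>C. f j x)"
  using assms(2)
proof (induction C rule: infinite_finite_induct)
  case (insert j C)
  then show ?case
    by (simp add: concave_on_add)
qed (simp_all add: concave_on_const assms(1))

lemma concave_on_compose_inner:
  assumes "concave_on UNIV g"
  shows "concave_on UNIV (\<lambda>y. g (y \<bullet> w))"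
  using assms by (simp add: concave_on_iff inner_add_left)

lemma concave_on_min_const: "concave_on UNIV (\<lambda>t::real. min r t)"
  unfolding concave_on_iff
proof (intro conjI convex_UNIV ballI allI impI)
  fix s t u v :: real assume "0 \<le> u" "0 \<le> v" "u + v = 1"
  then have "u * min r s + v * min r t \<le> u * r + v * r"
    and "u * min r s + v * min r t \<le> u * s + v * t"
    by (intro add_mono mult_left_mono; simp)+
  with \<open>u + v = 1\<close> show "u * min r s + v * min r t \<le> min r (u *\<^sub>R s + v *\<^sub>R t)"
    by (simp flip: distrib_right)
qed

text \<open>The cap \<open>b = -\<infinity>\<close> yields the constant \<open>0\<close>, so no sign condition on \<open>b\<close> is needed.\<close>

lemma concave_on_real_of_ereal_min: "concave_on UNIV (\<lambda>t. real_of_ereal (min b (ereal t)))"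
proof (cases b)
  case (real r)
  then have "(\<lambda>t. real_of_ereal (min b (ereal t))) = (\<lambda>t. min r t)"
    by (auto simp: min_def)
  then show ?thesis
    using concave_on_min_const by simp
qed (simp_all add: concave_on_ident concave_on_const)

lemma concave_on_wtp_fun:
  assumes "wtp_params C c b w"
  shows "concave_on UNIV (wtp_fun C c b w)"
  unfolding wtp_fun_def[abs_def]
proof (rule concave_on_sum_fun)
  fix j assume "j \<in> C"
  then have "0 \<le> c j"
    using assms by (simp add: wtp_params_def less_imp_le)
  then show "concave_on UNIV (\<lambda>y. c j * real_of_ereal (min (b j) (ereal (y \<bullet> w j))))"
    by (intro concave_on_cmul concave_on_compose_inner concave_on_real_of_ereal_min)
qed simp

lemma unit_cube_eq_cbox: "unit_cube = cbox (0 :: real ^ 'n::finite) 1"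
  by (auto simp: unit_cube_def mem_box_cart)

lemma bdd_above_concave_image_unit_cube:
  fixes f :: "real ^ 'n::finite \<Rightarrow> real"
  assumes "concave_on UNIV f" "S \<subseteq> unit_cube"
  shows "bdd_above (f ` S)"
proof -
  have "continuous_on UNIV (\<lambda>x. - f x)"
    using assms(1) by (intro convex_on_continuous) (simp_all add: concave_on_def)
  from continuous_on_minus[OF this] have "continuous_on UNIV f"
    by simp
  then have "bounded (f ` unit_cube)"
    unfolding unit_cube_eq_cbox
    by (metis compact_cbox compact_continuous_image compact_imp_bounded continuous_on_subset subset_UNIV)
  then show ?thesis
    using assms(2) by (meson bdd_above_mono bounded_imp_bdd_above image_mono)
qed

lemma convex_X_tilde: "convex (X_tilde l :: (real ^ 'n::finite) set)"
proof -
  have "X_tilde l = unit_cube \<inter> {x :: real ^ 'n. 1 \<bullet> x \<le> real l}"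
    by (auto simp: X_tilde_def inner_vec_def)
  then show ?thesis
    by (simp add: unit_cube_eq_cbox convex_Int convex_halfspace_le)
qed

lemma convex_dominated_pairs: "convex {(x, y :: real ^ 'n::finite). \<forall>i. y $ i \<le> x $ i}"
  by (auto simp: convex_def intro!: add_mono mult_left_mono)

lemma convex_Sigma_Y_tilde:
  assumes "convex S"
  shows "convex (SIGMA x:S. Y_tilde I x)"
proof -
  have "(SIGMA x:S. Y_tilde I x)
      = (S \<times> (unit_cube \<inter> matroid_polytope I)) \<inter> {(x, y). \<forall>i. y $ i \<le> x $ i}"
    by (auto simp: Y_tilde_def)
  then show ?thesis
    using assms by (simp add: convex_Int convex_Times convex_dominated_pairs
        unit_cube_eq_cbox matroid_polytope_def)
qed

lemma zero_in_Y_tilde: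
  assumes "matroid I" "x \<in> unit_cube"
  shows "0 \<in> Y_tilde I x"
proof -
  have "char_vec {} = 0"
    by (simp add: char_vec_def vec_eq_iff)
  moreover have "{} \<in> I"
    using assms(1) by (simp add: matroid_def)
  ultimately have "0 \<in> matroid_polytope I"
    unfolding matroid_polytope_def by (metis hull_inc image_eqI)
  then show ?thesis
    using assms(2) by (simp add: Y_tilde_def unit_cube_def)
qed

theorem lemma16:
  fixes I :: "'n::finite set set"
    and C :: "'c set" and c :: "'c \<Rightarrow> real" and b :: "'c \<Rightarrow> ereal" and w :: "'c \<Rightarrow> real ^ 'n"
    and l :: nat
  assumes "matroid I"
    and "wtp_params C c b w"
  shows "concave_on (X_tilde l) (F_tilde I C c b w)"
  unfolding F_tilde_def[abs_def]
proof (rule concave_on_SUP_convex_graph)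
  show "convex (SIGMA x:X_tilde l. Y_tilde I x)"
    by (rule convex_Sigma_Y_tilde[OF convex_X_tilde])
  show "concave_on UNIV (wtp_fun C c b w)"
    using assms(2) by (rule concave_on_wtp_fun)
  fix x :: "real ^ 'n" assume "x \<in> X_tilde l"
  then show "Y_tilde I x \<noteq> {}"
    using zero_in_Y_tilde[OF assms(1)] by (auto simp: X_tilde_def)
  show "Y_tilde I x \<subseteq> UNIV"
    by simp
  have "Y_tilde I x \<subseteq> unit_cube"
    by (auto simp: Y_tilde_def)
  then show "bdd_above (wtp_fun C c b w ` Y_tilde I x)"
    using concave_on_wtp_fun[OF assms(2)] by (rule bdd_above_concave_image_unit_cube[rotated])
qed

end
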